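(* Let $H:\mathbb{R}^n\rightrightarrows\mathbb{R}^n$ be a closed convex process such that $\mathcal{F}(H)^-\cap\operatorname{cl}(\mathcal{F}(H^+))=\{0\}$. If $V\in\mathcal{V}$ is a weak Lyapunov function for $H$, then $W:=(V|_{\mathcal{F}(H)})^\star$ is a strong Lyapunov function for $H^+$.
   Context: A set-valued map $H:\mathbb{R}^n\rightrightarrows\mathbb{R}^n$ is a convex process if its graph $\{(x,y)\mid y\in H(x)\}$ is a convex cone, and closed if the graph is closed. For a set-valued map $G$, a trajectory is a sequence $(x_k)_{k\ge0}$ with $x_{k+1}\in G(x_k)$ for all $k\ge0$, and $\mathcal{F}(G)$ is the set of $\xi$ such that some trajectory has $x_0=\xi$. The positive dual process is defined by $p\in H^+(q)\iff\langle p,x\rangle\le\langle q,y\rangle$ for all $(x,y)\in\operatorname{graph}(H)$. For a set $\mathcal{C}$, $\mathcal{C}^-=\{y\mid\langle x,y\rangle\le0\ \forall x\in\mathcal{C}\}$; $\operatorname{cl}$ denotes closure. $\mathcal{V}$ is the set of extended real-valued functions $f:\mathbb{R}^n\to\mathbb{R}\cup\{\pm\infty\}$ that are closed and convex (closed convex epigraph), positive semi-definite ($f(0)=0$, $f\ge0$) and positively homogeneous of degree 2 ($f(\lambda x)=\lambda^2f(x)$ for $\lambda\ge0$). For a convex cone $\mathcal{C}$, $f\in\mathcal{V}$ is positive definite with respect to $\mathcal{C}$ if there exist $0<\alpha\le\beta<\infty$ with $\alpha\|x\|^2\le f(x)\le\beta\|x\|^2$ for all $x\in\mathcal{C}$.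 $f|_{\mathcal{C}}(x)=f(x)$ if $x\in\mathcal{C}$ and $+\infty$ otherwise; $f^\star(y)=\sup_x\{y\cdot x-f(x)\}$ is the convex conjugate. For a convex process $G$: $V\in\mathcal{V}$ is a weak Lyapunov function for $G$ if $V$ is positive definite with respect to $\mathcal{F}(G)$ and there is $\gamma\in(0,1)$ such that for every $x\in\mathcal{F}(G)$ there exists $y\in\mathcal{F}(G)\cap G(x)$ with $V(y)\le\gamma V(x)$; $V\in\mathcal{V}$ is a strong Lyapunov function for $G$ if $V$ is positive definite with respect to $\mathcal{F}(G)$ and there is $\gamma\in(0,1)$ such that for every $x\in\mathcal{F}(G)$ and every $y\in\mathcal{F}(G)\cap G(x)$, $V(y)\le\gamma V(x)$. *)

theory Defs
  imports "HOL-Analysis.Analysis" "HOL-Library.Extended_Real"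
begin

type_synonym 'a setmap = "'a \<Rightarrow> 'a set"

definition graph_sv :: "'a setmap \<Rightarrow> ('a \<times> 'a) set" where
  "graph_sv H = {(x, y). y \<in> H x}"

definition convex_process :: "('a::euclidean_space) setmap \<Rightarrow> bool" where
  "convex_process H \<longleftrightarrow> convex_cone (graph_sv H)"

definition closed_convex_process :: "('a::euclidean_space) setmap \<Rightarrow> bool" where
  "closed_convex_process H \<longleftrightarrow> convex_process H \<and> closed (graph_sv H)"

definition feas :: "'a setmap \<Rightarrow> 'a set" where
  "feas G = {\<xi>. \<exists>x::nat \<Rightarrow> 'a. x 0 = \<xi> \<and> (\<forall>k. x (Suc k) \<in> G (x k))}"

definition pos_dual :: "('a::euclidean_space) setmap \<Rightarrow> 'a setmap" where
  "pos_dual H q = {p. \<forall>(x, y) \<in> graph_sv H. p \<bullet> x \<le> q \<bullet> y}"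

definition polar_cone :: "('a::euclidean_space) set \<Rightarrow> 'a set" where
  "polar_cone C = {y. \<forall>x\<in>C. x \<bullet> y \<le> 0}"

definition epi :: "('a::euclidean_space \<Rightarrow> ereal) \<Rightarrow> ('a \<times> real) set" where
  "epi f = {(x, t). f x \<le> ereal t}"

definition classV :: "('a::euclidean_space \<Rightarrow> ereal) set" where
  "classV = {f. closed (epi f) \<and> convex (epi f) \<and> f 0 = 0 \<and> (\<forall>x. f x \<ge> 0)
      \<and> (\<forall>x. \<forall>c::real. c \<ge> 0 \<longrightarrow> f (c *\<^sub>R x) = ereal (c\<^sup>2) * f x)}"

definition pos_def_wrt :: "('a::euclidean_space \<Rightarrow> ereal) \<Rightarrow> 'a set \<Rightarrow> bool" where
  "pos_def_wrt f C \<longleftrightarrow> (\<exists>\<alpha> \<beta>::real. 0 < \<alpha> \<and> \<alpha> \<le> \<beta> \<and>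
      (\<forall>x\<in>C. ereal (\<alpha> * (norm x)\<^sup>2) \<le> f x \<and> f x \<le> ereal (\<beta> * (norm x)\<^sup>2)))"

definition restrict_fun :: "('a \<Rightarrow> ereal) \<Rightarrow> 'a set \<Rightarrow> 'a \<Rightarrow> ereal" where
  "restrict_fun f C x = (if x \<in> C then f x else \<infinity>)"

definition conjugate :: "('a::euclidean_space \<Rightarrow> ereal) \<Rightarrow> 'a \<Rightarrow> ereal" where
  "conjugate f y = (SUP x. ereal (y \<bullet> x) - f x)"

definition weak_lyapunov :: "('a::euclidean_space \<Rightarrow> ereal) \<Rightarrow> 'a setmap \<Rightarrow> bool" where
  "weak_lyapunov V G \<longleftrightarrow> V \<in> classV \<and> pos_def_wrt V (feas G) \<and>
     (\<exists>\<gamma>::real. 0 < \<gamma> \<and> \<gamma> < 1 \<and>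
        (\<forall>x\<in>feas G. \<exists>y\<in>feas G \<inter> G x. V y \<le> ereal \<gamma> * V x))"

definition strong_lyapunov :: "('a::euclidean_space \<Rightarrow> ereal) \<Rightarrow> 'a setmap \<Rightarrow> bool" where
  "strong_lyapunov V G \<longleftrightarrow> V \<in> classV \<and> pos_def_wrt V (feas G) \<and>
     (\<exists>\<gamma>::real. 0 < \<gamma> \<and> \<gamma> < 1 \<and>
        (\<forall>x\<in>feas G. \<forall>y\<in>feas G \<inter> G x. V y \<le> ereal \<gamma> * V x))"

end

theory Submission
  imports Defs
begin

text \<open>
  On \<open>F = \<F>(H)\<close> the weak Lyapunov function \<open>V\<close> is finite and squeezed between \<open>\<alpha>|x|\<^sup>2\<close> and
  \<open>\<beta>|x|\<^sup>2\<close>, so its conjugate \<open>W\<close> satisfies \<open>0 \<le> W p \<le> |p|\<^sup>2/(4\<alpha>)\<close>; being a supremum of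
  affine functions it is closed and convex, and it inherits 2-homogeneity because \<open>F\<close> is a cone.
  The polar condition yields, by compactness of the unit sphere, a \<open>\<delta> > 0\<close> such that every
  \<open>p \<in> \<F>(H\<^sup>+)\<close> has some \<open>x \<in> F\<close>, \<open>|x| \<le> 1\<close>, with \<open>p \<bullet> x \<ge> \<delta>|p|\<close>; testing \<open>W p\<close> on a
  multiple of \<open>x\<close> gives \<open>W p \<ge> \<delta>\<^sup>2|p|\<^sup>2/(4\<beta>)\<close>. Finally, if \<open>q \<in> H\<^sup>+(p)\<close> and \<open>x \<in> F\<close>, pick
  \<open>y \<in> F \<inter> H(x)\<close> with \<open>V y \<le> \<gamma> V x\<close>; then
  \<open>q \<bullet> x - V x \<le> p \<bullet> y - V y/\<gamma> = \<gamma>(p \<bullet> (y/\<gamma>) - V(y/\<gamma>)) \<le> \<gamma> W p\<close>, so \<open>W\<close> decreases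
  along every step of \<open>H\<^sup>+\<close>.
\<close>

lemma graph_pos_dual_iff:
  "(q, p) \<in> graph_sv (pos_dual H) \<longleftrightarrow> (\<forall>x y. y \<in> H x \<longrightarrow> p \<bullet> x \<le> q \<bullet> y)"
  by (auto simp: graph_sv_def pos_dual_def)

lemma convex_process_pos_dual: "convex_process (pos_dual H)"
  unfolding convex_process_def convex_cone_iff
proof (intro conjI ballI allI impI)
  show "0 \<in> graph_sv (pos_dual H)"
    unfolding zero_prod_def graph_pos_dual_iff by simp
next
  fix u v assume u: "u \<in> graph_sv (pos_dual H)" and v: "v \<in> graph_sv (pos_dual H)"
  obtain q p q' p' where uv: "u = (q, p)" "v = (q', p')" by (cases u, cases v) simp
  have "p \<bullet> x + p' \<bullet> x \<le> q \<bullet> y + q' \<bullet> y" if "y \<in> H x" for x y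
    using u v that unfolding uv graph_pos_dual_iff by (simp add: add_mono)
  then show "u + v \<in> graph_sv (pos_dual H)"
    unfolding uv by (simp add: graph_pos_dual_iff inner_add_left)
next
  fix u and c :: real assume u: "u \<in> graph_sv (pos_dual H)" and "0 \<le> c"
  obtain q p where uqp: "u = (q, p)" by (cases u) simp
  have "c * (p \<bullet> x) \<le> c * (q \<bullet> y)" if "y \<in> H x" for x y
    using u \<open>0 \<le> c\<close> that unfolding uqp graph_pos_dual_iff by (simp add: mult_left_mono)
  then show "c *\<^sub>R u \<in> graph_sv (pos_dual H)"
    unfolding uqp by (simp add: graph_pos_dual_iff)
qed

lemma zero_in_feas:
  assumes "convex_process H"
  shows "0 \<in> feas H"
proof -
  have "0 \<in> graph_sv H"
    using assms convex_cone_contains_0 unfolding convex_process_def by blast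
  then show ?thesis
    unfolding feas_def graph_sv_def zero_prod_def by (intro CollectI exI[of _ "\<lambda>_. 0"]) simp
qed

lemma conic_feas:
  assumes "convex_process H"
  shows "conic (feas H)"
  unfolding conic_def
proof (intro allI impI)
  fix \<xi> and c :: real assume "\<xi> \<in> feas H" "0 \<le> c"
  then obtain x where x: "x 0 = \<xi>" "\<And>k. x (Suc k) \<in> H (x k)"
    unfolding feas_def by blast
  have "(x k, x (Suc k)) \<in> graph_sv H" for k
    using x(2) by (simp add: graph_sv_def)
  then have "c *\<^sub>R (x k, x (Suc k)) \<in> graph_sv H" for k
    using assms \<open>0 \<le> c\<close> convex_cone_scaleR unfolding convex_process_def by blast
  then show "c *\<^sub>R \<xi> \<in> feas H"
    unfolding feas_def graph_sv_def using x(1) by (intro CollectI exI[of _ "\<lambda>k. c *\<^sub>R x k"]) auto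
qed

definition psd_homogeneous2 :: "('a::real_vector \<Rightarrow> ereal) \<Rightarrow> bool" where
  "psd_homogeneous2 f \<longleftrightarrow> f 0 = 0 \<and> (\<forall>x. 0 \<le> f x) \<and>
     (\<forall>x c. 0 \<le> c \<longrightarrow> f (c *\<^sub>R x) = ereal (c\<^sup>2) * f x)"

lemma classV_iff:
  "f \<in> classV \<longleftrightarrow> closed (epi f) \<and> convex (epi f) \<and> psd_homogeneous2 f"
  by (auto simp: classV_def psd_homogeneous2_def)

lemma psd_homogeneous2_restrict_fun:
  assumes "psd_homogeneous2 f" "conic C" "0 \<in> C"
  shows "psd_homogeneous2 (restrict_fun f C)"
  unfolding psd_homogeneous2_def
proof (intro conjI allI impI)
  show "restrict_fun f C 0 = 0" "0 \<le> restrict_fun f C x" for x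
    using assms(1,3) by (auto simp: restrict_fun_def psd_homogeneous2_def)
next
  fix x and c :: real assume "0 \<le> c"
  show "restrict_fun f C (c *\<^sub>R x) = ereal (c\<^sup>2) * restrict_fun f C x"
  proof (cases "c = 0")
    case True
    \<comment> \<open>outside \<open>C\<close> this relies on \<open>0 * \<infinity> = 0\<close> in \<open>ereal\<close>\<close>
    then show ?thesis using assms(1,3) by (simp add: restrict_fun_def psd_homogeneous2_def)
  next
    case False
    then have "c *\<^sub>R x \<in> C \<longleftrightarrow> x \<in> C"
      using assms(2) \<open>0 \<le> c\<close> conicD[of C "c *\<^sub>R x" "inverse c"] conicD[of C x c] by auto
    then show ?thesis
      using assms(1) \<open>0 \<le> c\<close> False by (simp add: restrict_fun_def psd_homogeneous2_def)
  qed
qed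

lemma conjugate_upper: "ereal (p \<bullet> x) - f x \<le> conjugate f p"
  unfolding conjugate_def by (rule SUP_upper) simp

lemma conjugate_le_iff: "conjugate f p \<le> t \<longleftrightarrow> (\<forall>x. ereal (p \<bullet> x) - f x \<le> t)"
  unfolding conjugate_def by (simp add: SUP_le_iff)

lemma closed_convex_epi_conjugate:
  "closed (epi (conjugate f)) \<and> convex (epi (conjugate f))"
proof -
  define S where "S x = {z. ereal (fst z \<bullet> x) - f x \<le> ereal (snd z)}" for x
  have "epi (conjugate f) = (\<Inter>x. S x)"
    by (auto simp: epi_def S_def conjugate_le_iff)
  moreover have "closed (S x) \<and> convex (S x)" for x
  proof (cases "f x")
    case (real r)
    then have "S x = {z. (x, -1) \<bullet> z \<le> r}"
      by (auto simp: S_def inner_prod_def inner_commute)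
    then show ?thesis by (simp add: closed_halfspace_le convex_halfspace_le)
  qed (simp_all add: S_def)
  ultimately show ?thesis by (auto intro: closed_INT convex_INT)
qed

lemma conjugate_scaleR:
  assumes "psd_homogeneous2 f" "0 < c"
  shows "conjugate f (c *\<^sub>R p) = ereal (c\<^sup>2) * conjugate f p"
proof -
  have "c \<noteq> 0" using \<open>0 < c\<close> by simp
  have surj: "range (\<lambda>z::'a. c *\<^sub>R z) = UNIV"
    by (rule surjI[of _ "\<lambda>x. inverse c *\<^sub>R x"]) (simp add: \<open>c \<noteq> 0\<close>)
  have "ereal ((c *\<^sub>R p) \<bullet> (c *\<^sub>R z)) - f (c *\<^sub>R z) = ereal (c\<^sup>2) * (ereal (p \<bullet> z) - f z)" for z
    using assms by (cases "f z") (auto simp: psd_homogeneous2_def power2_eq_square algebra_simps)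
  then have "conjugate f (c *\<^sub>R p) = (SUP z. ereal (c\<^sup>2) * (ereal (p \<bullet> z) - f z))"
    unfolding conjugate_def by (subst surj[symmetric]) (simp add: image_image)
  also have "\<dots> = ereal (c\<^sup>2) * conjugate f p"
    unfolding conjugate_def by (rule Sup_ereal_mult_left'[symmetric]) auto
  finally show ?thesis .
qed

lemma conjugate_classV:
  assumes "psd_homogeneous2 f"
  shows "conjugate f \<in> classV"
  unfolding classV_iff psd_homogeneous2_def
proof (intro conjI allI impI closed_convex_epi_conjugate[THEN conjunct1]
    closed_convex_epi_conjugate[THEN conjunct2])
  show nonneg: "0 \<le> conjugate f p" for p
    using conjugate_upper[of p 0 f] assms by (simp add: psd_homogeneous2_def zero_ereal_def)
  have "conjugate f 0 \<le> 0"
    using assms unfolding conjugate_le_iff psd_homogeneous2_def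
    by (simp add: ereal_diff_le_self flip: zero_ereal_def)
  then show "conjugate f 0 = 0"
    using nonneg[of 0] by (rule antisym)
  show "conjugate f (c *\<^sub>R p) = ereal (c\<^sup>2) * conjugate f p" if "0 \<le> c" for c p
    using that conjugate_scaleR[OF assms, of c p] \<open>conjugate f 0 = 0\<close>
    by (cases "c = 0") auto
qed

lemma linear_minus_quadratic_le:
  fixes a b t :: real
  assumes "0 < a"
  shows "b * t - a * t\<^sup>2 \<le> b\<^sup>2 / (4 * a)"
proof -
  have "b\<^sup>2 / (4 * a) - (b * t - a * t\<^sup>2) = (b - 2 * a * t)\<^sup>2 / (4 * a)"
    using assms by (simp add: field_simps power2_eq_square)
  moreover have "0 \<le> (b - 2 * a * t)\<^sup>2 / (4 * a)"
    using assms by simp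
  ultimately show ?thesis by linarith
qed

lemma conjugate_le_quadratic:
  assumes "0 < a" "\<And>x. ereal (a * (norm x)\<^sup>2) \<le> f x"
  shows "conjugate f p \<le> ereal ((norm p)\<^sup>2 / (4 * a))"
  unfolding conjugate_le_iff
proof
  fix x
  have "ereal (p \<bullet> x) - f x \<le> ereal (p \<bullet> x - a * (norm x)\<^sup>2)"
    using ereal_minus_mono[OF order_refl assms(2), of "ereal (p \<bullet> x)" x] by simp
  also have "p \<bullet> x - a * (norm x)\<^sup>2 \<le> norm p * norm x - a * (norm x)\<^sup>2"
    by (simp add: norm_cauchy_schwarz)
  also have "\<dots> \<le> (norm p)\<^sup>2 / (4 * a)"
    using linear_minus_quadratic_le[OF assms(1)] .
  finally show "ereal (p \<bullet> x) - f x \<le> ereal ((norm p)\<^sup>2 / (4 * a))"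
    by simp
qed

lemma quadratic_le_conjugate:
  assumes "0 \<le> d" "d \<le> p \<bullet> x" "0 < b" "\<And>t. 0 \<le> t \<Longrightarrow> f (t *\<^sub>R x) \<le> ereal (t\<^sup>2 * b)"
  shows "ereal (d\<^sup>2 / (4 * b)) \<le> conjugate f p"
proof -
  define t where "t = d / (2 * b)"
  have "0 \<le> t"
    using assms(1,3) by (simp add: t_def)
  have "d\<^sup>2 / (4 * b) = t * d - t\<^sup>2 * b"
    using assms(3) by (simp add: t_def field_simps power2_eq_square)
  also have "\<dots> \<le> p \<bullet> (t *\<^sub>R x) - t\<^sup>2 * b"
    using mult_left_mono[OF assms(2) \<open>0 \<le> t\<close>] by simp
  finally have "ereal (d\<^sup>2 / (4 * b)) \<le> ereal (p \<bullet> (t *\<^sub>R x)) - ereal (t\<^sup>2 * b)"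
    by simp
  also have "\<dots> \<le> ereal (p \<bullet> (t *\<^sub>R x)) - f (t *\<^sub>R x)"
    using ereal_minus_mono[OF order_refl assms(4)[OF \<open>0 \<le> t\<close>]] .
  also have "\<dots> \<le> conjugate f p"
    by (rule conjugate_upper)
  finally show ?thesis .
qed

lemma pos_def_wrtI:
  assumes "0 < a" "0 < b"
    and "\<And>x. x \<in> C \<Longrightarrow> ereal (a * (norm x)\<^sup>2) \<le> f x"
    and "\<And>x. x \<in> C \<Longrightarrow> f x \<le> ereal (b * (norm x)\<^sup>2)"
  shows "pos_def_wrt f C"
  unfolding pos_def_wrt_def
proof (intro exI conjI ballI)
  fix x assume "x \<in> C"
  have "min a b * (norm x)\<^sup>2 \<le> a * (norm x)\<^sup>2"
    by (simp add: mult_right_mono)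
  then show "ereal (min a b * (norm x)\<^sup>2) \<le> f x"
    using assms(3)[OF \<open>x \<in> C\<close>] order_trans ereal_less_eq(3) by blast
  show "f x \<le> ereal (b * (norm x)\<^sup>2)"
    using assms(4)[OF \<open>x \<in> C\<close>] .
qed (use assms(1,2) in auto)

lemma pos_def_wrt_conjugate_restrict_fun:
  assumes "conic F" "pos_def_wrt V F"
    and "0 < \<delta>" "\<And>p. p \<in> G \<Longrightarrow> \<exists>x\<in>F. norm x \<le> 1 \<and> \<delta> * norm p \<le> p \<bullet> x"
  shows "pos_def_wrt (conjugate (restrict_fun V F)) G"
proof -
  obtain \<alpha> \<beta> where "0 < \<alpha>" "\<alpha> \<le> \<beta>"
    and V: "\<And>x. x \<in> F \<Longrightarrow> ereal (\<alpha> * (norm x)\<^sup>2) \<le> V x \<and> V x \<le> ereal (\<beta> * (norm x)\<^sup>2)"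
    using assms(2) unfolding pos_def_wrt_def by blast
  have "ereal (\<alpha> * (norm x)\<^sup>2) \<le> restrict_fun V F x" for x
    using V by (simp add: restrict_fun_def)
  from conjugate_le_quadratic[OF \<open>0 < \<alpha>\<close> this]
  have upper: "conjugate (restrict_fun V F) p \<le> ereal (1 / (4 * \<alpha>) * (norm p)\<^sup>2)" for p
    by simp
  have lower: "ereal (\<delta>\<^sup>2 / (4 * \<beta>) * (norm p)\<^sup>2) \<le> conjugate (restrict_fun V F) p"
    if "p \<in> G" for p
  proof -
    obtain x where x: "x \<in> F" "norm x \<le> 1" "\<delta> * norm p \<le> p \<bullet> x"
      using assms(4) \<open>p \<in> G\<close> by blast
    have "restrict_fun V F (t *\<^sub>R x) \<le> ereal (t\<^sup>2 * \<beta>)" if "0 \<le> t" for t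
    proof -
      have "\<beta> * (norm (t *\<^sub>R x))\<^sup>2 \<le> t\<^sup>2 * \<beta>"
        using \<open>0 < \<alpha>\<close> \<open>\<alpha> \<le> \<beta>\<close> x(2) by (simp add: power_mult_distrib power_le_one mult_left_le)
      then show ?thesis
        using V[OF conicD[OF assms(1) x(1) that]] conicD[OF assms(1) x(1) that]
        by (auto simp: restrict_fun_def intro: order_trans)
    qed
    then have "ereal ((\<delta> * norm p)\<^sup>2 / (4 * \<beta>)) \<le> conjugate (restrict_fun V F) p"
      using quadratic_le_conjugate[OF _ x(3)] assms(3) \<open>0 < \<alpha>\<close> \<open>\<alpha> \<le> \<beta>\<close> by simp
    then show ?thesis
      by (simp add: power_mult_distrib)
  qed
  show ?thesis
    using \<open>0 < \<alpha>\<close> \<open>\<alpha> \<le> \<beta>\<close> assms(3) by (intro pos_def_wrtI[OF _ _ lower upper]) auto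
qed

lemma conjugate_descent_step:
  assumes f: "psd_homogeneous2 f" and "0 < \<gamma>"
    and "q \<bullet> x \<le> p \<bullet> y" "f y \<le> ereal \<gamma> * f x"
  shows "ereal (q \<bullet> x) - f x \<le> ereal \<gamma> * conjugate f p"
proof (cases "f x = \<infinity>")
  case False
  have nonneg: "0 \<le> f z" for z
    using f by (simp add: psd_homogeneous2_def)
  obtain a where a: "f x = ereal a"
    using False nonneg[of x] by (cases "f x") auto
  obtain b where b: "f y = ereal b"
    using assms(4) nonneg[of y] a by (cases "f y") auto
  have "f (inverse \<gamma> *\<^sub>R y) = ereal (b / \<gamma>\<^sup>2)"
    using f \<open>0 < \<gamma>\<close> b by (simp add: psd_homogeneous2_def power_inverse divide_inverse mult.commute)
  then have "ereal (p \<bullet> y / \<gamma> - b / \<gamma>\<^sup>2) \<le> conjugate f p"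
    using conjugate_upper[of p "inverse \<gamma> *\<^sub>R y" f] by (simp add: divide_inverse mult.commute)
  then have "ereal \<gamma> * ereal (p \<bullet> y / \<gamma> - b / \<gamma>\<^sup>2) \<le> ereal \<gamma> * conjugate f p"
    using \<open>0 < \<gamma>\<close> by (intro ereal_mult_left_mono) auto
  moreover have "q \<bullet> x - a \<le> \<gamma> * (p \<bullet> y / \<gamma> - b / \<gamma>\<^sup>2)"
  proof -
    have "\<gamma> * (p \<bullet> y / \<gamma> - b / \<gamma>\<^sup>2) = p \<bullet> y - b / \<gamma>"
      using \<open>0 < \<gamma>\<close> by (simp add: field_simps power2_eq_square)
    moreover have "b / \<gamma> \<le> a"
      using assms(4) a b \<open>0 < \<gamma>\<close> by (simp add: divide_le_eq mult.commute)
    ultimately show ?thesis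
      using assms(3) by linarith
  qed
  ultimately show ?thesis
    using a by (metis ereal_less_eq(3) ereal_minus(1) order_trans times_ereal.simps(1))
qed simp

lemma conjugate_pos_dual_le:
  assumes "psd_homogeneous2 f" "0 < \<gamma>"
    and descent: "\<And>x. f x \<noteq> \<infinity> \<Longrightarrow> \<exists>y\<in>H x. f y \<le> ereal \<gamma> * f x"
    and "q \<in> pos_dual H p"
  shows "conjugate f q \<le> ereal \<gamma> * conjugate f p"
  unfolding conjugate_le_iff
proof
  fix x
  show "ereal (q \<bullet> x) - f x \<le> ereal \<gamma> * conjugate f p"
  proof (cases "f x = \<infinity>")
    case False
    then obtain y where y: "y \<in> H x" "f y \<le> ereal \<gamma> * f x"
      using descent by blast
    have "q \<bullet> x \<le> p \<bullet> y"
      using assms(4) y(1) by (auto simp: pos_dual_def graph_sv_def)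
    then show ?thesis
      using conjugate_descent_step[OF assms(1,2) _ y(2)] by blast
  qed simp
qed

lemma polar_cone_conicI:
  assumes "conic F" "\<And>x. x \<in> F \<Longrightarrow> norm x \<le> 1 \<Longrightarrow> x \<bullet> l \<le> 0"
  shows "l \<in> polar_cone F"
  unfolding polar_cone_def
proof (intro CollectI ballI)
  fix x assume "x \<in> F"
  show "x \<bullet> l \<le> 0"
  proof (cases "x = 0")
    case False
    have "inverse (norm x) *\<^sub>R x \<in> F"
      using assms(1) \<open>x \<in> F\<close> by (simp add: conicD)
    moreover have "norm (inverse (norm x) *\<^sub>R x) \<le> 1"
      using False by simp
    ultimately have "inverse (norm x) *\<^sub>R x \<bullet> l \<le> 0"
      by (rule assms(2))
    then show ?thesis
      using False by (simp add: mult_le_0_iff)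
  qed simp
qed

lemma uniform_pairing_if_polar_cone_inter_closure:
  fixes F G :: "'a::euclidean_space set"
  assumes "conic F" "F \<noteq> {}" "conic G" "polar_cone F \<inter> closure G \<subseteq> {0}"
  shows "\<exists>\<delta>>0. \<forall>p\<in>G. \<exists>x\<in>F. norm x \<le> 1 \<and> \<delta> * norm p \<le> p \<bullet> x"
proof (rule ccontr)
  assume no_bound: "\<not> ?thesis"
  have "\<exists>q\<in>G. norm q = 1 \<and> (\<forall>x\<in>F. norm x \<le> 1 \<longrightarrow> q \<bullet> x < inverse (Suc n))" for n
  proof -
    have "0 < inverse (real (Suc n))"
      by simp
    then obtain p where "p \<in> G" and p: "\<And>x. x \<in> F \<Longrightarrow> norm x \<le> 1 \<Longrightarrow> p \<bullet> x < inverse (Suc n) * norm p"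
      using no_bound unfolding not_le[symmetric] by blast
    have "p \<noteq> 0"
      using p[of 0] assms(1,2) conic_contains_0 by fastforce
    then show ?thesis
      using p \<open>p \<in> G\<close> conicD[OF assms(3) \<open>p \<in> G\<close>, of "inverse (norm p)"]
      by (intro bexI[of _ "inverse (norm p) *\<^sub>R p"]) (auto simp: field_simps)
  qed
  then obtain q where q: "\<And>n. q n \<in> G" "\<And>n. norm (q n) = 1"
    "\<And>n x. x \<in> F \<Longrightarrow> norm x \<le> 1 \<Longrightarrow> q n \<bullet> x < inverse (Suc n)"
    by metis
  obtain l r where "l \<in> sphere 0 1" "strict_mono r" and lim: "(q \<circ> r) \<longlonglongrightarrow> l"
    using compact_imp_seq_compact[OF compact_sphere, of 0 1] q(2) by (metis seq_compactE mem_sphere_0)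
  have "l \<in> closure G"
    unfolding closure_sequential using lim q(1) by (metis comp_apply)
  moreover have "l \<in> polar_cone F"
  proof (rule polar_cone_conicI[OF assms(1)])
    fix x assume "x \<in> F" "norm x \<le> 1"
    have "(\<lambda>n. q (r n) \<bullet> x) \<longlonglongrightarrow> l \<bullet> x"
      using lim unfolding comp_def by (intro tendsto_intros)
    moreover have "(\<lambda>n. inverse (real (Suc (r n)))) \<longlonglongrightarrow> 0"
      using LIMSEQ_subseq_LIMSEQ[OF LIMSEQ_inverse_real_of_nat \<open>strict_mono r\<close>] by (simp add: comp_def)
    ultimately have "l \<bullet> x \<le> 0"
      using q(3)[OF \<open>x \<in> F\<close> \<open>norm x \<le> 1\<close>] by (intro LIMSEQ_le) (auto intro: less_imp_le)
    then show "x \<bullet> l \<le> 0"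
      by (simp add: inner_commute)
  qed
  ultimately show False
    using assms(4) \<open>l \<in> sphere 0 1\<close> by auto
qed

theorem theorem2:
  fixes H :: "('a::euclidean_space) setmap" and V :: "'a \<Rightarrow> ereal"
  assumes "closed_convex_process H"
    and "polar_cone (feas H) \<inter> closure (feas (pos_dual H)) = {0}"
    and "V \<in> classV"
    and "weak_lyapunov V H"
  shows "strong_lyapunov (conjugate (restrict_fun V (feas H))) (pos_dual H)"
proof -
  let ?F = "feas H" and ?G = "feas (pos_dual H)" and ?f = "restrict_fun V (feas H)"
  have H: "convex_process H"
    using assms(1) by (simp add: closed_convex_process_def)
  have "0 \<in> ?F" "conic ?F" "conic ?G"
    using zero_in_feas[OF H] conic_feas[OF H] conic_feas[OF convex_process_pos_dual] .
  then have "?F \<noteq> {}"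
    by blast
  from uniform_pairing_if_polar_cone_inter_closure[OF \<open>conic ?F\<close> this \<open>conic ?G\<close>] assms(2)
  obtain \<delta> where \<delta>: "0 < \<delta>" "\<And>p. p \<in> ?G \<Longrightarrow> \<exists>x\<in>?F. norm x \<le> 1 \<and> \<delta> * norm p \<le> p \<bullet> x"
    by auto
  have "pos_def_wrt V ?F"
    using assms(4) by (simp add: weak_lyapunov_def)
  from pos_def_wrt_conjugate_restrict_fun[OF \<open>conic ?F\<close> this \<delta>]
  have "pos_def_wrt (conjugate ?f) ?G" .
  obtain \<gamma> where "0 < \<gamma>" "\<gamma> < 1" and descent: "\<And>x. x \<in> ?F \<Longrightarrow> \<exists>y\<in>?F \<inter> H x. V y \<le> ereal \<gamma> * V x"
    using assms(4) unfolding weak_lyapunov_def by blast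
  have "\<exists>y\<in>H x. ?f y \<le> ereal \<gamma> * ?f x" if "?f x \<noteq> \<infinity>" for x
  proof -
    have "x \<in> ?F"
      using that by (auto simp: restrict_fun_def split: if_splits)
    with descent show ?thesis
      by (auto simp: restrict_fun_def)
  qed
  moreover have f: "psd_homogeneous2 ?f"
    using assms(3) \<open>conic ?F\<close> \<open>0 \<in> ?F\<close> by (simp add: classV_iff psd_homogeneous2_restrict_fun)
  ultimately have "conjugate ?f q \<le> ereal \<gamma> * conjugate ?f p" if "q \<in> pos_dual H p" for p q
    using conjugate_pos_dual_le[OF f \<open>0 < \<gamma>\<close>] that by blast
  then show ?thesis
    unfolding strong_lyapunov_def
    using conjugate_classV[OF f] \<open>pos_def_wrt (conjugate ?f) ?G\<close> \<open>0 < \<gamma>\<close> \<open>\<gamma> < 1\<close>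
    by (intro conjI exI[of _ \<gamma>]) auto
qed

end
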